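(* Let $F\in\mathcal F^N$ and let $X^1,\dots,X^N$ be mm-spaces. For $i=1,\dots,N$ let $F^i:=F\circ\iota_i$, where $\iota_i\colon[0,+\infty)\to[0,+\infty)^N$ places its argument in the $i$-th coordinate and $0$ elsewhere. Then for every $\kappa_1\in(0,1)$ and $\kappa_2,\dots,\kappa_N\in(0,1/4)$, $$\mathrm{OD}\Big(\big(\textstyle\prod_{i=1}^NX^i,d_F,\bigotimes_{i=1}^Nm_{X^i}\big);-2\sum_{i=1}^N\kappa_i\Big)\le 4F^1(\mathrm{OD}(X^1;-\kappa_1))+8\sum_{i=2}^NF^i(\mathrm{OD}(X^i;-\kappa_i)).$$
   Context: An mm-space is a triple $(X,d_X,m_X)$ with $(X,d_X)$ complete separable metric space and $m_X$ a Borel probability measure. $\mathcal F^N$ is the set of continuous functions $F\colon[0,+\infty)^N\to[0,+\infty)$ such that for any metric spaces $(X_i,d_i)$, $d_F((x_i),(x'_i)):=F(d_1(x_1,x'_1),\dots,d_N(x_N,x'_N))$ is a metric on $\prod X_i$. Partial diameter: $\mathrm{PD}(X;\alpha)$ = infimum of $\operatorname{diam}A$ over Borel $A$ with $m_X(A)\ge\alpha$. Observable diameter: $\mathrm{OD}(X;-\kappa):=\sup_f\mathrm{PD}((\mathbb R,|\cdot|,f_*m_X);1-\kappa)$ over 1-Lipschitz $f\colon X\to\mathbb R$. *)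

theory Defs
  imports "HOL-Probability.Probability"
begin

definition mm_space :: "'a set \<Rightarrow> ('a \<Rightarrow> 'a \<Rightarrow> real) \<Rightarrow> 'a measure \<Rightarrow> bool" where
  "mm_space X d m \<longleftrightarrow>
     Metric_space X d \<and> Metric_space.mcomplete X d \<and>
     separable_space (Metric_space.mtopology X d) \<and>
     space m = X \<and>
     sets m = sigma_sets X {U. openin (Metric_space.mtopology X d) U} \<and>
     prob_space m"

text \<open>Diameter of a subset of the reals, with values in [0,\<infinity>]
  (empty set has diameter 0, unbounded sets have diameter \<infinity>).\<close>
definition ediam :: "real set \<Rightarrow> ennreal" where
  "ediam A = (SUP x\<in>A. SUP y\<in>A. ennreal (dist x y))"

definition partial_diam :: "real measure \<Rightarrow> real \<Rightarrow> ennreal" where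
  "partial_diam \<mu> \<alpha> = (INF A\<in>{A. A \<in> sets \<mu> \<and> measure \<mu> A \<ge> \<alpha>}. ediam A)"

definition lipschitz1 :: "'a set \<Rightarrow> ('a \<Rightarrow> 'a \<Rightarrow> real) \<Rightarrow> ('a \<Rightarrow> real) \<Rightarrow> bool" where
  "lipschitz1 X d f \<longleftrightarrow> (\<forall>x\<in>X. \<forall>y\<in>X. \<bar>f x - f y\<bar> \<le> d x y)"

definition obs_diam :: "'a set \<Rightarrow> ('a \<Rightarrow> 'a \<Rightarrow> real) \<Rightarrow> 'a measure \<Rightarrow> real \<Rightarrow> ennreal" where
  "obs_diam X d m \<kappa> =
     (SUP f\<in>{f. lipschitz1 X d f}. partial_diam (distr m borel f) (1 - \<kappa>))"

text \<open>The metric d_F on the product of N spaces (indices 1..N, points are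
  extensional functions on {1..N}).\<close>
definition prod_metric :: "nat \<Rightarrow> ((nat \<Rightarrow> real) \<Rightarrow> real) \<Rightarrow> (nat \<Rightarrow> 'a \<Rightarrow> 'a \<Rightarrow> real)
     \<Rightarrow> (nat \<Rightarrow> 'a) \<Rightarrow> (nat \<Rightarrow> 'a) \<Rightarrow> real" where
  "prod_metric N F d x y = F (\<lambda>i\<in>{1..N}. d i (x i) (y i))"

text \<open>The class F^N: continuous F : [0,\<infinity>)^N \<rightarrow> [0,\<infinity>) such that d_F is a metric
  on the product for all metric spaces. [0,\<infinity>)^N is represented by extensional
  functions on {1..N}. Metric spaces are taken with carriers in a fixed infinite type
  (real); since the metric axioms involve at most three points per factor, this is
  equivalent to quantifying over all metric spaces.\<close>
definition F_class :: "nat \<Rightarrow> ((nat \<Rightarrow> real) \<Rightarrow> real) \<Rightarrow> bool" where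
  "F_class N F \<longleftrightarrow>
     continuous_on (PiE {1..N} (\<lambda>_. {0..})) F \<and>
     (\<forall>t\<in>PiE {1..N} (\<lambda>_. {0..}). 0 \<le> F t) \<and>
     (\<forall>(Y::nat \<Rightarrow> real set) e. (\<forall>i\<in>{1..N}. Metric_space (Y i) (e i)) \<longrightarrow>
        Metric_space (PiE {1..N} Y) (prod_metric N F e))"

definition coord_emb :: "nat \<Rightarrow> nat \<Rightarrow> real \<Rightarrow> (nat \<Rightarrow> real)" where
  "coord_emb N i t = (\<lambda>j\<in>{1..N}. if j = i then t else 0)"

end

theory Submission
  imports Defs
begin

text \<open>Let \<open>f\<close> be 1-Lipschitz for \<open>d\<^sub>F\<close>. Replacing the dependence of \<open>f\<close> on \<open>x\<^sub>1, \<dots>, x\<^sub>k\<close>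
  successively by lower \<open>\<kappa>\<^sub>i\<close>-quantiles in the single coordinates gives functions \<open>g\<^sub>k\<close> with
  \<open>|g\<^sub>k x - g\<^sub>k y| \<le> F(0, \<dots>, 0, d\<^sub>k\<^sub>+\<^sub>1, \<dots>, d\<^sub>N)\<close>; in particular \<open>g\<^sub>N\<close> is constant.
  A section \<open>t \<mapsto> g\<^sub>k\<^sub>-\<^sub>1(x, x\<^sub>k := t)\<close> has modulus of continuity \<open>F\<^sup>k \<circ> d\<^sub>k\<close>, and \<open>F\<^sup>k(s) \<le> 2 F\<^sup>k(D)\<close>
  for \<open>s \<le> 2D\<close> by the triangle inequality of \<open>d\<^sub>F\<close>. Hence, by the definition of the observable
  diameter, the section exceeds its lower quantile \<open>g\<^sub>k(x)\<close> by more than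
  \<open>2 F\<^sup>k(OD(X\<^sup>k; -\<kappa>\<^sub>k))\<close> or falls below it only on a set of measure \<open>\<le> 2\<kappa>\<^sub>k\<close>. By Fubini, off a set of
  measure \<open>\<le> 2 \<Sum> \<kappa>\<^sub>i\<close> the value \<open>f(x)\<close> lies in an interval of length \<open>\<Sum> 2 F\<^sup>i(OD(X\<^sup>i; -\<kappa>\<^sub>i))\<close>
  above the constant \<open>g\<^sub>N\<close>. This bound is stronger than the stated one; of \<open>\<kappa>\<^sub>i < 1/4\<close> only
  \<open>\<kappa>\<^sub>i < 1\<close> is used.\<close>

section \<open>Partial and observable diameters of mm-spaces\<close>

lemma mm_space_prob_space: "mm_space X d m \<Longrightarrow> prob_space m"
  by (simp add: mm_space_def)

lemma mm_space_space_eq: "mm_space X d m \<Longrightarrow> space m = X"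
  by (simp add: mm_space_def)

lemma mm_space_Metric_space: "mm_space X d m \<Longrightarrow> Metric_space X d"
  by (simp add: mm_space_def)

lemma mm_space_borel_measurable_continuous:
  fixes g :: "'a \<Rightarrow> real"
  assumes mm: "mm_space X d m"
    and cont: "\<And>x e. x \<in> X \<Longrightarrow> e > 0 \<Longrightarrow> \<exists>\<delta>>0. \<forall>y\<in>X. d x y < \<delta> \<longrightarrow> \<bar>g x - g y\<bar> < e"
  shows "g \<in> borel_measurable m"
proof (rule borel_measurableI)
  fix S :: "real set" assume S: "open S"
  interpret Metric_space X d using mm by (simp add: mm_space_def)
  have "openin mtopology (g -` S \<inter> X)"
    unfolding openin_mtopology
  proof (intro conjI allI impI)
    fix x assume x: "x \<in> g -` S \<inter> X"
    then obtain e where e: "e > 0" "ball (g x) e \<subseteq> S"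
      using S open_contains_ball by blast
    obtain \<delta> where \<delta>: "\<delta> > 0" "\<forall>y\<in>X. d x y < \<delta> \<longrightarrow> \<bar>g x - g y\<bar> < e"
      using cont[of x e] x e by auto
    have "mball x \<delta> \<subseteq> g -` S \<inter> X"
    proof
      fix y assume "y \<in> mball x \<delta>"
      then have "y \<in> X" "\<bar>g x - g y\<bar> < e" using \<delta> by auto
      then show "y \<in> g -` S \<inter> X" using e by (auto simp: dist_real_def)
    qed
    then show "\<exists>r>0. mball x r \<subseteq> g -` S \<inter> X" using \<delta> by blast
  qed auto
  then show "g -` S \<inter> space m \<in> sets m"
    using mm by (auto simp: mm_space_def intro: sigma_sets.Basic)
qed

lemma lipschitz1_borel_measurable:
  assumes "mm_space X d m" and "lipschitz1 X d f"
  shows "f \<in> borel_measurable m"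
  using assms(2) unfolding lipschitz1_def
  by (intro mm_space_borel_measurable_continuous[OF assms(1)]) (meson le_less_trans)

lemma ediam_atLeastAtMost_le: "a \<le> b \<Longrightarrow> ediam {a..b} \<le> ennreal (b - a)"
  unfolding ediam_def by (intro SUP_least ennreal_leI) (auto simp: dist_real_def)

lemma partial_diam_le_ediam:
  assumes "f \<in> borel_measurable M" and "A \<in> sets borel"
    and "\<alpha> \<le> measure M (f -` A \<inter> space M)"
  shows "partial_diam (distr M borel f) \<alpha> \<le> ediam A"
  unfolding partial_diam_def
  by (rule INF_lower) (use assms in \<open>auto simp: measure_distr\<close>)

lemma partial_diam_le_obs_diam:
  "lipschitz1 X d f \<Longrightarrow> partial_diam (distr m borel f) (1 - \<kappa>) \<le> obs_diam X d m \<kappa>"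
  unfolding obs_diam_def by (rule SUP_upper) simp

lemma mm_space_exists_ball_measure_gt:
  assumes mm: "mm_space X d m" and x0: "x0 \<in> X" and \<kappa>: "0 < \<kappa>"
  obtains n :: nat where "1 - \<kappa> < measure m {y\<in>X. d x0 y < real n}"
proof -
  interpret prob_space m using mm_space_prob_space[OF mm] .
  interpret Metric_space X d using mm_space_Metric_space[OF mm] .
  define B where "B n = {y\<in>X. d x0 y < real n}" for n :: nat
  have "(\<lambda>y. d x0 y) \<in> borel_measurable m"
  proof (rule mm_space_borel_measurable_continuous[OF mm])
    fix x e assume x: "x \<in> X" and e: "(e::real) > 0"
    have "\<bar>d x0 x - d x0 y\<bar> \<le> d x y" if "y \<in> X" for y
      using triangle[OF x0 x that] triangle[OF x0 that x] commute[of x y] by auto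
    then show "\<exists>\<delta>>0. \<forall>y\<in>X. d x y < \<delta> \<longrightarrow> \<bar>d x0 x - d x0 y\<bar> < e"
      using e by (meson le_less_trans)
  qed
  then have "{y\<in>space m. d x0 y < real n} \<in> sets m" for n
    by measurable
  then have "range B \<subseteq> sets m"
    unfolding B_def using mm_space_space_eq[OF mm] by auto
  moreover have "incseq B" unfolding B_def incseq_def by auto
  moreover have "(\<Union>n. B n) = space m"
    using reals_Archimedean2 mm_space_space_eq[OF mm] unfolding B_def by auto
  ultimately have "(\<lambda>n. measure m (B n)) \<longlonglongrightarrow> 1"
    using finite_Lim_measure_incseq prob_space by metis
  then have "eventually (\<lambda>n. 1 - \<kappa> < measure m (B n)) sequentially"
    by (rule order_tendstoD) (use \<kappa> in simp)
  then show ?thesis using that unfolding B_def eventually_sequentially by blast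
qed

lemma obs_diam_finite:
  assumes mm: "mm_space X d m" and \<kappa>: "0 < \<kappa>"
  shows "obs_diam X d m \<kappa> < \<infinity>"
proof -
  interpret prob_space m using mm_space_prob_space[OF mm] .
  obtain x0 where x0: "x0 \<in> X" using not_empty mm_space_space_eq[OF mm] by auto
  obtain n :: nat where n: "1 - \<kappa> < measure m {y\<in>X. d x0 y < real n}"
    using mm_space_exists_ball_measure_gt[OF mm x0 \<kappa>] .
  have "obs_diam X d m \<kappa> \<le> ennreal (2 * real n)"
    unfolding obs_diam_def
  proof (rule SUP_least)
    fix f assume "f \<in> {f. lipschitz1 X d f}"
    then have f: "lipschitz1 X d f" by simp
    then have fm: "f \<in> borel_measurable m" by (rule lipschitz1_borel_measurable[OF mm])
    let ?A = "{f x0 - real n .. f x0 + real n}"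
    have "{y\<in>X. d x0 y < real n} \<subseteq> f -` ?A \<inter> space m"
      using f x0 mm_space_space_eq[OF mm] unfolding lipschitz1_def by force
    then have "measure m {y\<in>X. d x0 y < real n} \<le> measure m (f -` ?A \<inter> space m)"
      by (intro finite_measure_mono measurable_sets[OF fm]) auto
    then have "partial_diam (distr m borel f) (1 - \<kappa>) \<le> ediam ?A"
      using n by (intro partial_diam_le_ediam[OF fm]) auto
    also have "\<dots> \<le> ennreal (2 * real n)"
      using ediam_atLeastAtMost_le[of "f x0 - real n" "f x0 + real n"] by simp
    finally show "partial_diam (distr m borel f) (1 - \<kappa>) \<le> ennreal (2 * real n)" .
  qed
  then show ?thesis using le_less_trans by fastforce
qed

definition dist_to_set :: "('a \<Rightarrow> 'a \<Rightarrow> real) \<Rightarrow> 'a set \<Rightarrow> 'a \<Rightarrow> real" where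
  "dist_to_set d B y = Inf ((\<lambda>a. d a y) ` B)"

context Metric_space
begin

lemma dist_to_set_le: "a \<in> B \<Longrightarrow> dist_to_set d B y \<le> d a y"
  unfolding dist_to_set_def by (rule cInf_lower) (auto intro: bdd_belowI[of _ 0])

lemma dist_to_set_greatest: "B \<noteq> {} \<Longrightarrow> (\<And>a. a \<in> B \<Longrightarrow> c \<le> d a y) \<Longrightarrow> c \<le> dist_to_set d B y"
  unfolding dist_to_set_def by (rule cInf_greatest) auto

lemma dist_to_set_zero:
  assumes "a \<in> B" "B \<subseteq> M"
  shows "dist_to_set d B a = 0"
proof -
  have "dist_to_set d B a \<le> 0" using dist_to_set_le[OF assms(1), of a] assms by auto
  moreover have "0 \<le> dist_to_set d B a" using assms(1) by (intro dist_to_set_greatest) auto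
  ultimately show ?thesis by simp
qed

lemma lipschitz1_dist_to_set:
  assumes B: "B \<subseteq> M" "B \<noteq> {}"
  shows "lipschitz1 M d (dist_to_set d B)"
  unfolding lipschitz1_def
proof (intro ballI)
  fix x y assume x: "x \<in> M" and y: "y \<in> M"
  have "dist_to_set d B x - d x y \<le> dist_to_set d B y"
  proof (rule dist_to_set_greatest[OF B(2)])
    fix a assume a: "a \<in> B"
    have "d a x \<le> d a y + d y x" using triangle[of a y x] a B x y by auto
    then show "dist_to_set d B x - d x y \<le> d a y"
      using dist_to_set_le[OF a, of x] commute[of x y] by linarith
  qed
  moreover have "dist_to_set d B y - d x y \<le> dist_to_set d B x"
  proof (rule dist_to_set_greatest[OF B(2)])
    fix a assume a: "a \<in> B"
    have "d a y \<le> d a x + d x y" using triangle[of a x y] a B x y by auto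
    then show "dist_to_set d B y - d x y \<le> d a x" using dist_to_set_le[OF a, of y] by linarith
  qed
  ultimately show "\<bar>dist_to_set d B x - dist_to_set d B y\<bar> \<le> d x y" by linarith
qed

end

lemma (in prob_space) Int_nonempty_if_prob_add_gt_1:
  assumes "A \<in> events" "B \<in> events" "1 < prob A + prob B"
  shows "A \<inter> B \<noteq> {}"
proof
  assume "A \<inter> B = {}"
  then have "prob (A \<union> B) = prob A + prob B" using assms by (simp add: finite_measure_Union)
  then show False using assms prob_le_1[of "A \<union> B"] by linarith
qed

text \<open>The distance to \<open>B\<^sub>0\<close> is 1-Lipschitz, so it concentrates on an interval of length
  about \<open>OD\<close>, which must meet its values on both \<open>B\<^sub>0\<close> (zero) and \<open>B\<^sub>1\<close>.\<close>
lemma obs_diam_separation: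
  assumes mm: "mm_space X d m" and \<kappa>: "0 < \<kappa>"
    and B0: "B0 \<in> sets m" "\<kappa> < measure m B0"
    and B1: "B1 \<in> sets m" "\<kappa> < measure m B1"
    and e: "e > 0"
  obtains a b where "a \<in> B0" "b \<in> B1" "d a b < enn2real (obs_diam X d m \<kappa>) + e"
proof -
  interpret prob_space m using mm_space_prob_space[OF mm] .
  interpret Metric_space X d using mm_space_Metric_space[OF mm] .
  define D where "D = enn2real (obs_diam X d m \<kappa>)"
  define h where "h = dist_to_set d B0"
  have B0X: "B0 \<subseteq> X" using B0 sets.sets_into_space mm_space_space_eq[OF mm] by auto
  have "B0 \<noteq> {}" using B0 \<kappa> by auto
  have h: "lipschitz1 X d h" unfolding h_def by (rule lipschitz1_dist_to_set[OF B0X \<open>B0 \<noteq> {}\<close>])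
  have hm: "h \<in> borel_measurable m" by (rule lipschitz1_borel_measurable[OF mm h])
  have "partial_diam (distr m borel h) (1 - \<kappa>) \<le> ennreal D"
    using partial_diam_le_obs_diam[OF h] obs_diam_finite[OF mm \<kappa>]
    unfolding D_def by (simp add: ennreal_enn2real_if less_top)
  also have "\<dots> < ennreal (D + e)"
    using e D_def by (simp add: ennreal_lessI)
  finally obtain A where A: "A \<in> sets borel" "1 - \<kappa> \<le> measure (distr m borel h) A"
    and A_diam: "ediam A < ennreal (D + e)"
    unfolding partial_diam_def INF_less_iff by auto
  define Q where "Q = h -` A \<inter> space m"
  have Q: "Q \<in> sets m" "1 - \<kappa> \<le> measure m Q"
    using A hm unfolding Q_def by (auto simp: measure_distr)
  have "\<exists>a\<in>B0. \<exists>b\<in>B1. d a b < D + e"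
  proof (rule ccontr)
    assume far: "\<not> ?thesis"
    obtain a where a: "a \<in> Q" "a \<in> B0"
      using Int_nonempty_if_prob_add_gt_1[OF Q(1) B0(1)] Q(2) B0(2) by auto
    obtain b where b: "b \<in> Q" "b \<in> B1"
      using Int_nonempty_if_prob_add_gt_1[OF Q(1) B1(1)] Q(2) B1(2) by auto
    have "h a = 0" unfolding h_def by (rule dist_to_set_zero[OF a(2) B0X])
    moreover have "D + e \<le> h b"
      unfolding h_def by (rule dist_to_set_greatest[OF \<open>B0 \<noteq> {}\<close>]) (use far b in \<open>auto simp: not_less\<close>)
    moreover have "h a \<in> A" "h b \<in> A" using a b Q_def by auto
    ultimately have "ennreal (D + e) \<le> ediam A"
      unfolding ediam_def dist_real_def
      by (intro SUP_upper2[OF \<open>h b \<in> A\<close>] SUP_upper2[OF \<open>h a \<in> A\<close>] ennreal_leI) simp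
    then show False using A_diam by simp
  qed
  then show ?thesis using that unfolding D_def by blast
qed

section \<open>Lower quantiles\<close>

definition lower_quantile :: "real measure \<Rightarrow> real \<Rightarrow> real" where
  "lower_quantile \<mu> \<kappa> = Inf {t. \<kappa> < cdf \<mu> t}"

context real_distribution
begin

lemma cdf_gt_nonempty:
  assumes "\<kappa> < 1"
  shows "{t. \<kappa> < cdf M t} \<noteq> {}"
proof -
  have "eventually (\<lambda>t. \<kappa> < cdf M t) at_top"
    using cdf_lim_at_top_prob assms by (rule order_tendstoD)
  then show ?thesis by (auto simp: eventually_at_top_linorder)
qed

lemma cdf_gt_bdd_below:
  assumes "0 < \<kappa>"
  shows "bdd_below {t. \<kappa> < cdf M t}"
proof -
  have "eventually (\<lambda>t. cdf M t < \<kappa>) at_bot"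
    using cdf_lim_at_bot assms by (rule order_tendstoD)
  then obtain b where b: "\<And>t. t \<le> b \<Longrightarrow> cdf M t < \<kappa>"
    by (auto simp: eventually_at_bot_linorder)
  show ?thesis
  proof (rule bdd_belowI)
    fix t assume "t \<in> {t. \<kappa> < cdf M t}"
    then show "b \<le> t" using b[of t] by (cases "t \<le> b") auto
  qed
qed

lemma cdf_lower_quantile_add:
  assumes "0 < \<kappa>" "\<kappa> < 1" "0 < e"
  shows "\<kappa> < cdf M (lower_quantile M \<kappa> + e)"
proof -
  have "Inf {t. \<kappa> < cdf M t} < lower_quantile M \<kappa> + e"
    using assms by (simp add: lower_quantile_def)
  then obtain t where "\<kappa> < cdf M t" "t < lower_quantile M \<kappa> + e"
    using cInf_less_iff[OF cdf_gt_nonempty[OF assms(2)] cdf_gt_bdd_below[OF assms(1)]] by auto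
  then show ?thesis using cdf_nondecreasing[of t "lower_quantile M \<kappa> + e"] by linarith
qed

lemma measure_lessThan_lower_quantile:
  assumes "0 < \<kappa>" "\<kappa> < 1"
  shows "measure M {..<lower_quantile M \<kappa>} \<le> \<kappa>"
proof (rule tendsto_upperbound[OF cdf_at_left])
  have below: "cdf M t \<le> \<kappa>" if "t < lower_quantile M \<kappa>" for t
    using that cInf_lower[OF _ cdf_gt_bdd_below[OF assms(1)], of t]
    unfolding lower_quantile_def by force
  show "eventually (\<lambda>t. cdf M t \<le> \<kappa>) (at_left (lower_quantile M \<kappa>))"
    using eventually_at_left_real[of "lower_quantile M \<kappa> - 1" "lower_quantile M \<kappa>"]
    by (auto elim!: eventually_mono intro: below)
qed simp

end

lemma lower_quantile_mono_shift:
  assumes \<mu>: "real_distribution \<mu>" and \<nu>: "real_distribution \<nu>" and \<kappa>: "0 < \<kappa>" "\<kappa> < 1"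
    and dominated: "\<And>t. cdf \<mu> t \<le> cdf \<nu> (t + c)"
  shows "lower_quantile \<nu> \<kappa> \<le> lower_quantile \<mu> \<kappa> + c"
proof -
  have "lower_quantile \<nu> \<kappa> - c \<le> Inf {t. \<kappa> < cdf \<mu> t}"
  proof (rule cInf_greatest[OF real_distribution.cdf_gt_nonempty[OF \<mu> \<kappa>(2)]])
    fix t assume "t \<in> {t. \<kappa> < cdf \<mu> t}"
    then have "t + c \<in> {t. \<kappa> < cdf \<nu> t}" using dominated[of t] by simp
    then have "lower_quantile \<nu> \<kappa> \<le> t + c"
      unfolding lower_quantile_def
      by (rule cInf_lower[OF _ real_distribution.cdf_gt_bdd_below[OF \<nu> \<kappa>(1)]])
    then show "lower_quantile \<nu> \<kappa> - c \<le> t" by simp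
  qed
  then show ?thesis unfolding lower_quantile_def by simp
qed

lemma cdf_distr:
  assumes "\<phi> \<in> borel_measurable M"
  shows "cdf (distr M borel \<phi>) t = measure M {x\<in>space M. \<phi> x \<le> t}"
  using assms by (simp add: cdf_def measure_distr vimage_def Int_def conj_commute)

lemma lower_quantile_distr_abs_diff_le:
  assumes M: "prob_space M" and \<phi>: "\<phi> \<in> borel_measurable M" and \<psi>: "\<psi> \<in> borel_measurable M"
    and \<kappa>: "0 < \<kappa>" "\<kappa> < 1"
    and close: "\<And>x. x \<in> space M \<Longrightarrow> \<bar>\<phi> x - \<psi> x\<bar> \<le> c"
  shows "\<bar>lower_quantile (distr M borel \<phi>) \<kappa> - lower_quantile (distr M borel \<psi>) \<kappa>\<bar> \<le> c"
proof -
  interpret prob_space M by (rule M)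
  have shift: "lower_quantile (distr M borel \<beta>) \<kappa> \<le> lower_quantile (distr M borel \<alpha>) \<kappa> + c"
    if \<alpha>: "\<alpha> \<in> borel_measurable M" and \<beta>: "\<beta> \<in> borel_measurable M"
      and le: "\<And>x. x \<in> space M \<Longrightarrow> \<beta> x \<le> \<alpha> x + c" for \<alpha> \<beta>
  proof (rule lower_quantile_mono_shift[OF _ _ \<kappa>])
    fix t
    have "measure M {x\<in>space M. \<alpha> x \<le> t} \<le> measure M {x\<in>space M. \<beta> x \<le> t + c}"
      using le \<beta> by (intro finite_measure_mono) (force, measurable)
    then show "cdf (distr M borel \<alpha>) t \<le> cdf (distr M borel \<beta>) (t + c)"
      by (simp add: cdf_distr \<alpha> \<beta>)
  qed (use \<alpha> \<beta> in auto)
  show ?thesis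
    using shift[OF \<phi> \<psi>] shift[OF \<psi> \<phi>] close by (fastforce simp: abs_le_iff)
qed

section \<open>The class \<open>\<F>\<^sup>N\<close> and doubling moduli\<close>

lemma dist_fun_le_twice:
  fixes x y :: "nat \<Rightarrow> real"
  assumes le: "\<And>i. dist (x i) (y i) \<le> \<delta>"
  shows "dist x y \<le> 2 * \<delta>"
proof -
  have geom: "summable (\<lambda>n. (1/2::real)^n)" by (simp add: summable_geometric_iff)
  have "dist x y \<le> (\<Sum>n. (1/2::real)^n * \<delta>)"
    unfolding dist_fun_def
  proof (rule suminf_le)
    fix n
    have "min (dist (x (from_nat n)) (y (from_nat n))) 1 \<le> \<delta>"
      using le[of "from_nat n"] by linarith
    then show "(1/2)^n * min (dist (x (from_nat n)) (y (from_nat n))) 1 \<le> (1/2::real)^n * \<delta>"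
      by (intro mult_left_mono) auto
  next
    show "summable (\<lambda>n. (1/2::real)^n * min (dist (x (from_nat n)) (y (from_nat n))) 1)"
      by (rule summable_comparison_test'[OF geom]) auto
  qed (rule summable_mult2[OF geom])
  also have "\<dots> = 2 * \<delta>"
    using suminf_mult2[OF geom, of \<delta>] suminf_geometric[of "1/2::real"] by simp
  finally show ?thesis .
qed

lemma F_class_Metric_space:
  fixes Y :: "nat \<Rightarrow> real set"
  assumes "F_class N F" "\<And>i. i \<in> {1..N} \<Longrightarrow> Metric_space (Y i) (e i)"
  shows "Metric_space (PiE {1..N} Y) (prod_metric N F e)"
  using assms unfolding F_class_def by blast

lemma F_class_nonneg: "F_class N F \<Longrightarrow> t \<in> PiE {1..N} (\<lambda>_. {0..}) \<Longrightarrow> 0 \<le> F t"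
  unfolding F_class_def by blast

lemma F_class_zero:
  assumes F: "F_class N F"
  shows "F (\<lambda>i\<in>{1..N}. 0) = 0"
proof -
  have "Metric_space {0::real} (\<lambda>_ _. 0)" by unfold_locales auto
  then interpret Metric_space "PiE {1..N} (\<lambda>_. {0::real})" "prod_metric N F (\<lambda>_ _ _. 0)"
    by (rule F_class_Metric_space[OF F])
  have "prod_metric N F (\<lambda>_ _ _. 0) (\<lambda>i\<in>{1..N}. 0::real) (\<lambda>i\<in>{1..N}. 0) = 0"
    by simp
  then show ?thesis unfolding prod_metric_def by simp
qed

lemma F_class_small_near_zero:
  assumes F: "F_class N F" and \<eta>: "\<eta> > 0"
  obtains \<delta> where "\<delta> > 0"
    "\<And>t. t \<in> PiE {1..N} (\<lambda>_. {0..}) \<Longrightarrow> (\<forall>i\<in>{1..N}. t i < \<delta>) \<Longrightarrow> F t < \<eta>"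
proof -
  let ?S = "PiE {1..N} (\<lambda>_. {0::real..})"
  let ?z = "\<lambda>i\<in>{1..N}. 0::real"
  have "continuous_on ?S F" "?z \<in> ?S" using F unfolding F_class_def by auto
  then obtain \<delta> where \<delta>: "\<delta> > 0" "\<forall>t\<in>?S. dist t ?z < \<delta> \<longrightarrow> dist (F t) (F ?z) < \<eta>"
    using \<eta> unfolding continuous_on_iff by blast
  show ?thesis
  proof (rule that[of "\<delta>/4"])
    fix t assume t: "t \<in> ?S" and small: "\<forall>i\<in>{1..N}. t i < \<delta>/4"
    have "dist (t i) (?z i) \<le> \<delta>/4" for i
    proof (cases "i \<in> {1..N}")
      case True
      then have "0 \<le> t i" "t i < \<delta>/4" using t small by auto
      then show ?thesis using True by (simp add: dist_real_def)
    qed (use PiE_arb[OF t] \<delta>(1) in auto)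
    then have "dist t ?z < \<delta>"
      using dist_fun_le_twice[of t ?z "\<delta>/4"] \<delta>(1) by simp
    then show "F t < \<eta>" using \<delta> t F_class_zero[OF F] by (force simp: dist_real_def)
  qed (use \<delta> in simp)
qed

lemma coord_emb_nonneg: "0 \<le> r \<Longrightarrow> coord_emb N k r \<in> PiE {1..N} (\<lambda>_. {0..})"
  by (auto simp: coord_emb_def)

definition doubling_modulus :: "(real \<Rightarrow> real) \<Rightarrow> bool" where
  "doubling_modulus \<omega> \<longleftrightarrow>
     (\<forall>r\<ge>0. 0 \<le> \<omega> r) \<and>
     (\<forall>e>0. \<exists>\<delta>>0. \<forall>r. 0 \<le> r \<and> r < \<delta> \<longrightarrow> \<omega> r < e) \<and>
     (\<forall>s D. 0 < s \<and> s \<le> 2 * D \<longrightarrow> \<omega> s \<le> 2 * \<omega> D)"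

lemma doubling_modulus_nonneg: "doubling_modulus \<omega> \<Longrightarrow> 0 \<le> r \<Longrightarrow> 0 \<le> \<omega> r"
  by (simp add: doubling_modulus_def)

lemma doubling_modulus_small:
  "doubling_modulus \<omega> \<Longrightarrow> 0 < e \<Longrightarrow> \<exists>\<delta>>0. \<forall>r. 0 \<le> r \<and> r < \<delta> \<longrightarrow> \<omega> r < e"
  by (simp add: doubling_modulus_def)

lemma doubling_modulus_doubling:
  "doubling_modulus \<omega> \<Longrightarrow> 0 < s \<Longrightarrow> s \<le> 2 * D \<Longrightarrow> \<omega> s \<le> 2 * \<omega> D"
  by (simp add: doubling_modulus_def)

lemma doubling_modulus_zero:
  assumes "doubling_modulus \<omega>"
  shows "\<omega> 0 = 0"
proof -
  have small: "\<omega> 0 < e" if "e > 0" for e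
    using doubling_modulus_small[OF assms that] by auto
  show ?thesis
  proof (rule ccontr)
    assume "\<omega> 0 \<noteq> 0"
    then have "0 < \<omega> 0" using doubling_modulus_nonneg[OF assms, of 0] by simp
    then show False using small[of "\<omega> 0"] by simp
  qed
qed

text \<open>The doubling inequality is the triangle inequality of \<open>d\<^sub>F\<close> on a product of one-point
  spaces with the three-point space \<open>{0,1,2}\<close> whose distances are \<open>d(0,2) = s\<close> and \<open>D\<close> otherwise.\<close>
lemma F_class_coord_doubling:
  assumes F: "F_class N F" and k: "k \<in> {1..N}" and s: "0 < s" "s \<le> 2 * D"
  shows "F (coord_emb N k s) \<le> 2 * F (coord_emb N k D)"
proof -
  define e :: "real \<Rightarrow> real \<Rightarrow> real" where
    "e x y = (if x = y then 0 else if {x, y} = {0, 2} then s else D)" for x y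
  define E where "E i = (if i = k then e else (\<lambda>_ _. 0))" for i
  define Y where "Y i = (if i = k then {0,1,2} else {0::real})" for i
  have "Metric_space {0,1,2::real} e"
    by unfold_locales (use s in \<open>auto simp: e_def doubleton_eq_iff\<close>)
  moreover have "Metric_space {0::real} (\<lambda>_ _. 0)" by unfold_locales auto
  ultimately interpret Metric_space "PiE {1..N} Y" "prod_metric N F E"
    by (intro F_class_Metric_space[OF F]) (auto simp: E_def Y_def)
  define pt where "pt c = (\<lambda>i\<in>{1..N}. if i = k then c else 0::real)" for c
  have "pt c \<in> PiE {1..N} Y" if "c \<in> {0,1,2}" for c
    using that by (auto simp: pt_def Y_def)
  then have tri: "prod_metric N F E (pt 0) (pt 2)
      \<le> prod_metric N F E (pt 0) (pt 1) + prod_metric N F E (pt 1) (pt 2)"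
    by (intro triangle) auto
  have coords: "(\<lambda>i\<in>{1..N}. E i (pt a i) (pt b i)) = coord_emb N k (e a b)" for a b
    by (auto simp: fun_eq_iff coord_emb_def pt_def E_def)
  have "e 0 2 = s" "e 0 1 = D" "e 1 2 = D" by (auto simp: e_def doubleton_eq_iff)
  then show ?thesis using tri unfolding prod_metric_def coords by simp
qed

lemma F_class_coord_doubling_modulus:
  assumes F: "F_class N F" and k: "k \<in> {1..N}"
  shows "doubling_modulus (\<lambda>r. F (coord_emb N k r))"
  unfolding doubling_modulus_def
proof (intro conjI allI impI)
  fix e :: real assume "e > 0"
  then obtain \<delta> where \<delta>: "\<delta> > 0"
    "\<And>t. t \<in> PiE {1..N} (\<lambda>_. {0..}) \<Longrightarrow> (\<forall>i\<in>{1..N}. t i < \<delta>) \<Longrightarrow> F t < e"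
    using F_class_small_near_zero[OF F] by blast
  show "\<exists>\<delta>>0. \<forall>r. 0 \<le> r \<and> r < \<delta> \<longrightarrow> F (coord_emb N k r) < e"
  proof (intro exI[of _ \<delta>] conjI allI impI)
    fix r :: real assume r: "0 \<le> r \<and> r < \<delta>"
    then have "\<forall>i\<in>{1..N}. coord_emb N k r i < \<delta>" using \<delta>(1) by (auto simp: coord_emb_def)
    then show "F (coord_emb N k r) < e" using \<delta>(2) coord_emb_nonneg r by blast
  qed (rule \<delta>(1))
next
  fix r :: real assume "0 \<le> r"
  then show "0 \<le> F (coord_emb N k r)" by (rule F_class_nonneg[OF F coord_emb_nonneg])
next
  fix s D :: real assume "0 < s \<and> s \<le> 2 * D"
  then show "F (coord_emb N k s) \<le> 2 * F (coord_emb N k D)"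
    using F_class_coord_doubling[OF F k] by blast
qed

section \<open>Concentration of a function with doubling modulus\<close>

lemma mm_space_borel_measurable_modulus:
  fixes \<phi> :: "'a \<Rightarrow> real"
  assumes mm: "mm_space X d m" and \<omega>: "doubling_modulus \<omega>"
    and \<phi>: "\<And>t s. t \<in> X \<Longrightarrow> s \<in> X \<Longrightarrow> \<bar>\<phi> t - \<phi> s\<bar> \<le> \<omega> (d t s)"
  shows "\<phi> \<in> borel_measurable m"
proof (rule mm_space_borel_measurable_continuous[OF mm])
  interpret Metric_space X d using mm_space_Metric_space[OF mm] .
  fix x e assume x: "x \<in> X" and "(e::real) > 0"
  then obtain \<delta> where \<delta>: "\<delta> > 0" "\<And>r. 0 \<le> r \<Longrightarrow> r < \<delta> \<Longrightarrow> \<omega> r < e"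
    using doubling_modulus_small[OF \<omega>] by blast
  have "\<bar>\<phi> x - \<phi> y\<bar> < e" if y: "y \<in> X" "d x y < \<delta>" for y
  proof -
    have "\<omega> (d x y) < e" using \<delta>(2)[OF nonneg y(2)] .
    then show ?thesis using \<phi>[OF x y(1)] by linarith
  qed
  then show "\<exists>\<delta>>0. \<forall>y\<in>X. d x y < \<delta> \<longrightarrow> \<bar>\<phi> x - \<phi> y\<bar> < e"
    using \<delta>(1) by blast
qed

lemma obs_diam_modulus_separation:
  assumes mm: "mm_space X d m" and \<kappa>: "0 < \<kappa>" and \<omega>: "doubling_modulus \<omega>"
    and B0: "B0 \<in> sets m" "\<kappa> < measure m B0"
    and B1: "B1 \<in> sets m" "\<kappa> < measure m B1"
    and \<eta>: "\<eta> > 0"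
  obtains a b where "a \<in> B0" "b \<in> B1"
    "\<omega> (d a b) \<le> 2 * \<omega> (enn2real (obs_diam X d m \<kappa>)) + \<eta>"
proof -
  interpret Metric_space X d using mm_space_Metric_space[OF mm] .
  define D where "D = enn2real (obs_diam X d m \<kappa>)"
  show ?thesis
  proof (cases "D > 0")
    case True
    obtain a b where ab: "a \<in> B0" "b \<in> B1" "d a b < D + D"
      using obs_diam_separation[OF mm \<kappa> B0 B1 True] unfolding D_def by blast
    have "\<omega> (d a b) \<le> 2 * \<omega> D"
    proof (cases "d a b > 0")
      case True
      then show ?thesis using doubling_modulus_doubling[OF \<omega>] ab by simp
    next
      case False
      then have "d a b = 0" using nonneg[of a b] by linarith
      then show ?thesis using doubling_modulus_zero[OF \<omega>] doubling_modulus_nonneg[OF \<omega>, of D] True by simp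
    qed
    then show ?thesis using \<eta> by (intro that[OF ab(1,2)]) (simp add: D_def)
  next
    case False
    then have "D = 0" using enn2real_nonneg unfolding D_def by (metis not_less order_antisym)
    obtain \<delta> where \<delta>: "\<delta> > 0" "\<And>r. 0 \<le> r \<Longrightarrow> r < \<delta> \<Longrightarrow> \<omega> r < \<eta>"
      using doubling_modulus_small[OF \<omega> \<eta>] by blast
    obtain a b where ab: "a \<in> B0" "b \<in> B1" "d a b < \<delta>"
      using obs_diam_separation[OF mm \<kappa> B0 B1 \<delta>(1)] \<open>D = 0\<close> unfolding D_def by auto
    have "\<omega> (d a b) < \<eta>" using \<delta>(2)[OF nonneg ab(3)] .
    then show ?thesis
      using doubling_modulus_zero[OF \<omega>] \<open>D = 0\<close> by (intro that[OF ab(1,2)]) (simp add: D_def)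
  qed
qed

lemma measure_le_lower_quantile_distr_add:
  assumes "prob_space M" "\<phi> \<in> borel_measurable M" "0 < \<kappa>" "\<kappa> < 1" "0 < e"
  shows "\<kappa> < measure M {x\<in>space M. \<phi> x \<le> lower_quantile (distr M borel \<phi>) \<kappa> + e}"
proof -
  interpret prob_space M by (rule assms(1))
  show ?thesis
    using real_distribution.cdf_lower_quantile_add[OF real_distribution_distr[OF assms(2)] assms(3-5)]
    by (simp add: cdf_distr assms(2))
qed

lemma measure_less_lower_quantile_distr:
  assumes "prob_space M" "\<phi> \<in> borel_measurable M" "0 < \<kappa>" "\<kappa> < 1"
  shows "measure M {x\<in>space M. \<phi> x < lower_quantile (distr M borel \<phi>) \<kappa>} \<le> \<kappa>"
proof -
  interpret prob_space M by (rule assms(1))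
  show ?thesis
    using real_distribution.measure_lessThan_lower_quantile[OF real_distribution_distr[OF assms(2)] assms(3,4)]
    by (simp add: measure_distr assms(2) vimage_def Int_def conj_commute)
qed

text \<open>The upper quantile of \<open>\<phi>\<close>, i.e. minus the lower quantile of \<open>-\<phi>\<close>, exceeds the lower one
  by at most \<open>2 \<omega>(OD)\<close>, since sets of measure \<open>> \<kappa>\<close> on which \<open>\<phi>\<close> is small resp. large come close.\<close>
lemma lower_quantile_concentration:
  fixes \<phi> :: "'a \<Rightarrow> real"
  assumes mm: "mm_space X d m" and \<kappa>: "0 < \<kappa>" "\<kappa> < 1" and \<omega>: "doubling_modulus \<omega>"
    and \<phi>: "\<And>t s. t \<in> X \<Longrightarrow> s \<in> X \<Longrightarrow> \<bar>\<phi> t - \<phi> s\<bar> \<le> \<omega> (d t s)"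
  defines "l \<equiv> lower_quantile (distr m borel \<phi>) \<kappa>"
  shows "measure m {t\<in>X. \<phi> t < l \<or> l + 2 * \<omega> (enn2real (obs_diam X d m \<kappa>)) < \<phi> t} \<le> 2 * \<kappa>"
proof -
  interpret prob_space m using mm_space_prob_space[OF mm] .
  have sp: "space m = X" using mm_space_space_eq[OF mm] .
  have \<phi>m: "\<phi> \<in> borel_measurable m" by (rule mm_space_borel_measurable_modulus[OF mm \<omega> \<phi>])
  define \<psi> where "\<psi> t = - \<phi> t" for t
  have \<psi>m: "\<psi> \<in> borel_measurable m" unfolding \<psi>_def using \<phi>m by measurable
  define u where "u = - lower_quantile (distr m borel \<psi>) \<kappa>"
  define G where "G = \<omega> (enn2real (obs_diam X d m \<kappa>))"
  have near: "u \<le> l + 2 * G + 3 * \<epsilon>" if \<epsilon>: "\<epsilon> > 0" for \<epsilon>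
  proof -
    let ?B0 = "{x\<in>space m. \<phi> x \<le> l + \<epsilon>}" and ?B1 = "{x\<in>space m. \<psi> x \<le> - u + \<epsilon>}"
    have "?B0 \<in> sets m" "?B1 \<in> sets m" using \<phi>m \<psi>m by measurable
    moreover have "\<kappa> < measure m ?B0" "\<kappa> < measure m ?B1"
      using measure_le_lower_quantile_distr_add[OF prob_space_axioms _ \<kappa> \<epsilon>] \<phi>m \<psi>m
      unfolding l_def u_def by auto
    ultimately obtain a b where "a \<in> ?B0" "b \<in> ?B1" and ab: "\<omega> (d a b) \<le> 2 * G + \<epsilon>"
      using obs_diam_modulus_separation[OF mm \<kappa>(1) \<omega> _ _ _ _ \<epsilon>] unfolding G_def by blast
    then have "a \<in> X" "b \<in> X" "\<phi> a \<le> l + \<epsilon>" "u - \<epsilon> \<le> \<phi> b"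
      using sp unfolding \<psi>_def by auto
    moreover from this have "\<phi> b - \<phi> a \<le> \<omega> (d a b)" using \<phi>[of a b] by (simp add: abs_le_iff)
    ultimately show ?thesis using ab by linarith
  qed
  have ul: "u \<le> l + 2 * G"
  proof (rule field_le_epsilon)
    fix e :: real assume "0 < e"
    then show "u \<le> l + 2 * G + e" using near[of "e / 3"] by simp
  qed
  have sets: "{x\<in>space m. \<phi> x < l} \<in> sets m" "{x\<in>space m. \<psi> x < - u} \<in> sets m"
    using \<phi>m \<psi>m by measurable
  have "measure m {t\<in>X. \<phi> t < l \<or> l + 2 * G < \<phi> t}
      \<le> measure m ({x\<in>space m. \<phi> x < l} \<union> {x\<in>space m. \<psi> x < - u})"
    using ul sp sets unfolding \<psi>_def by (intro finite_measure_mono) auto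
  also have "\<dots> \<le> measure m {x\<in>space m. \<phi> x < l} + measure m {x\<in>space m. \<psi> x < - u}"
    using sets by (intro measure_Un_le)
  also have "\<dots> \<le> 2 * \<kappa>"
    using measure_less_lower_quantile_distr[OF prob_space_axioms \<phi>m \<kappa>]
      measure_less_lower_quantile_distr[OF prob_space_axioms \<psi>m \<kappa>]
    unfolding l_def u_def by simp
  finally show ?thesis unfolding G_def .
qed

section \<open>Measurability and sections on finite products\<close>

lemma mm_space_countable_dense:
  assumes mm: "mm_space X d m"
  shows "\<exists>C. countable C \<and> C \<subseteq> X \<and> (\<forall>x\<in>X. \<forall>r>0. \<exists>c\<in>C. d c x < r)"
proof -
  interpret Metric_space X d using mm_space_Metric_space[OF mm] .
  obtain C where C: "countable C" "C \<subseteq> X" "mtopology closure_of C = X"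
    using mm unfolding mm_space_def separable_space_def by auto
  have "\<exists>c\<in>C. d c x < r" if "x \<in> X" "r > 0" for x r
  proof -
    have "x \<in> mtopology closure_of C" using that C(3) by simp
    then obtain y where "y \<in> C" "y \<in> mball x r"
      using \<open>r > 0\<close> unfolding metric_closure_of by blast
    then show ?thesis using commute by auto
  qed
  then show ?thesis using C(1,2) by blast
qed

lemma mm_space_ball_in_sets:
  assumes mm: "mm_space X d m" and c: "c \<in> X"
  shows "{y\<in>X. d c y < r} \<in> sets m"
proof -
  interpret Metric_space X d using mm_space_Metric_space[OF mm] .
  have "openin mtopology (mball c r)" by simp
  moreover have "{y\<in>X. d c y < r} = mball c r" using c by auto
  ultimately show ?thesis using mm by (auto simp: mm_space_def intro: sigma_sets.Basic)
qed

lemma space_PiM_mm_space: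
  assumes "\<And>i. i \<in> I \<Longrightarrow> mm_space (X i) (d i) (m i)"
  shows "space (PiM I m) = PiE I X"
  unfolding space_PiM using mm_space_space_eq[OF assms] by (intro PiE_cong) auto

definition ball_box :: "'i set \<Rightarrow> ('i \<Rightarrow> 'a set) \<Rightarrow> ('i \<Rightarrow> 'a \<Rightarrow> 'a \<Rightarrow> real) \<Rightarrow> ('i \<Rightarrow> 'a) \<Rightarrow> real
    \<Rightarrow> ('i \<Rightarrow> 'a) set" where
  "ball_box I X d c r = PiE I (\<lambda>i. {y \<in> X i. d i (c i) y < r})"

lemma ball_box_in_sets:
  assumes "finite I" "\<And>i. i \<in> I \<Longrightarrow> mm_space (X i) (d i) (m i)" "c \<in> PiE I X"
  shows "ball_box I X d c r \<in> sets (PiM I m)"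
  unfolding ball_box_def using assms by (intro sets_PiM_I_finite mm_space_ball_in_sets) auto

lemma ball_box_approx:
  assumes metric: "\<And>i. i \<in> I \<Longrightarrow> Metric_space (X i) (d i)"
    and C: "\<And>i. i \<in> I \<Longrightarrow> C i \<subseteq> X i"
    and dense: "\<And>i x r. i \<in> I \<Longrightarrow> x \<in> X i \<Longrightarrow> r > 0 \<Longrightarrow> \<exists>c\<in>C i. d i c x < r"
    and x: "x \<in> PiE I X" and \<delta>: "\<delta> > 0"
  obtains c n where "c \<in> PiE I C" "x \<in> ball_box I X d c (1 / Suc n)"
    "ball_box I X d c (1 / Suc n) \<subseteq> {y \<in> PiE I X. \<forall>i\<in>I. d i (x i) (y i) < \<delta>}"
proof -
  obtain n :: nat where n: "1 / real (Suc n) < \<delta> / 2"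
    using reals_Archimedean \<delta> by (metis half_gt_zero inverse_eq_divide)
  have "\<forall>i\<in>I. \<exists>c\<in>C i. d i c (x i) < 1 / Suc n"
    using dense x by (auto simp: PiE_iff)
  then obtain c0 where c0: "\<And>i. i \<in> I \<Longrightarrow> c0 i \<in> C i \<and> d i (c0 i) (x i) < 1 / Suc n"
    by metis
  define c where "c = restrict c0 I"
  have "y \<in> PiE I X \<and> (\<forall>i\<in>I. d i (x i) (y i) < \<delta>)" if y: "y \<in> ball_box I X d c (1 / Suc n)" for y
  proof -
    have "d i (x i) (y i) < \<delta>" if i: "i \<in> I" for i
    proof -
      interpret Metric_space "X i" "d i" using metric[OF i] .
      have "c i \<in> X i" "d i (c i) (x i) < 1 / Suc n"
        using c0[OF i] C[OF i] i unfolding c_def by auto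
      moreover have "x i \<in> X i" "y i \<in> X i" "d i (c i) (y i) < 1 / Suc n"
        using x y i unfolding ball_box_def by auto
      ultimately show ?thesis
        using triangle[of "x i" "c i" "y i"] commute[of "x i" "c i"] n by linarith
    qed
    moreover have "y \<in> PiE I X" using y unfolding ball_box_def by (auto simp: PiE_iff)
    ultimately show ?thesis by blast
  qed
  then have "ball_box I X d c (1 / Suc n) \<subseteq> {y \<in> PiE I X. \<forall>i\<in>I. d i (x i) (y i) < \<delta>}"
    by blast
  moreover have "x \<in> ball_box I X d c (1 / Suc n)" using x c0 unfolding ball_box_def c_def by auto
  moreover have "c \<in> PiE I C" using c0 unfolding c_def by auto
  ultimately show ?thesis using that by blast
qed

text \<open>By separability the preimage of an open set is a countable union of boxes of balls
  of radius \<open>1/(n+1)\<close> centred in a countable dense set.\<close>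
lemma PiM_mm_space_borel_measurable_continuous:
  fixes h :: "('i \<Rightarrow> 'a) \<Rightarrow> real"
  assumes I: "finite I" and mm: "\<And>i. i \<in> I \<Longrightarrow> mm_space (X i) (d i) (m i)"
   and cont: "\<And>x e. x \<in> PiE I X \<Longrightarrow> e > 0 \<Longrightarrow>
      \<exists>\<delta>>0. \<forall>y\<in>PiE I X. (\<forall>i\<in>I. d i (x i) (y i) < \<delta>) \<longrightarrow> \<bar>h x - h y\<bar> < e"
  shows "h \<in> borel_measurable (PiM I m)"
proof (rule borel_measurableI)
  fix S :: "real set" assume S: "open S"
  have "\<forall>i\<in>I. \<exists>C. countable C \<and> C \<subseteq> X i \<and> (\<forall>x\<in>X i. \<forall>r>0. \<exists>c\<in>C. d i c x < r)"
    using mm_space_countable_dense[OF mm] by blast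
  from bchoice[OF this] obtain C
    where "\<forall>i\<in>I. countable (C i) \<and> C i \<subseteq> X i \<and> (\<forall>x\<in>X i. \<forall>r>0. \<exists>c\<in>C i. d i c x < r)"
    by blast
  then have C: "\<And>i. i \<in> I \<Longrightarrow> countable (C i)" "\<And>i. i \<in> I \<Longrightarrow> C i \<subseteq> X i"
    "\<And>i x r. i \<in> I \<Longrightarrow> x \<in> X i \<Longrightarrow> r > 0 \<Longrightarrow> \<exists>c\<in>C i. d i c x < r"
    by auto
  define box where "box = (\<lambda>(c, n::nat). ball_box I X d c (1 / Suc n))"
  define fam where "fam = {cn \<in> PiE I C \<times> UNIV. box cn \<subseteq> h -` S \<inter> PiE I X}"
  have "countable (PiE I C \<times> (UNIV :: nat set))"
    using I C(1) by (intro countable_SIGMA countable_PiE) auto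
  then have "countable fam" unfolding fam_def by (rule countable_subset[rotated]) auto
  moreover have "box cn \<in> sets (PiM I m)" if "cn \<in> fam" for cn
    using that C(2) unfolding fam_def box_def by (auto intro!: ball_box_in_sets[OF I mm])
  ultimately have fam_sets: "(\<Union>cn\<in>fam. box cn) \<in> sets (PiM I m)"
    by (intro sets.countable_UN'') auto
  have "h -` S \<inter> PiE I X \<subseteq> (\<Union>cn\<in>fam. box cn)"
  proof
    fix x assume x: "x \<in> h -` S \<inter> PiE I X"
    then obtain e where e: "e > 0" "ball (h x) e \<subseteq> S"
      using S open_contains_ball by blast
    obtain \<delta> where \<delta>: "\<delta> > 0" "\<forall>y\<in>PiE I X. (\<forall>i\<in>I. d i (x i) (y i) < \<delta>) \<longrightarrow> \<bar>h x - h y\<bar> < e"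
      using cont[of x e] x e by auto
    obtain c n where c: "c \<in> PiE I C" "x \<in> ball_box I X d c (1 / Suc n)"
      and small: "ball_box I X d c (1 / Suc n) \<subseteq> {y \<in> PiE I X. \<forall>i\<in>I. d i (x i) (y i) < \<delta>}"
      by (rule ball_box_approx[of I X d C x \<delta>]) (use mm_space_Metric_space[OF mm] C(2,3) x \<delta>(1) in auto)
    have "ball_box I X d c (1 / Suc n) \<subseteq> h -` S \<inter> PiE I X"
      using small \<delta>(2) e by (fastforce simp: dist_real_def)
    then have "(c, n) \<in> fam" "x \<in> box (c, n)" using c unfolding fam_def box_def by auto
    then show "x \<in> (\<Union>cn\<in>fam. box cn)" by blast
  qed
  moreover have "(\<Union>cn\<in>fam. box cn) \<subseteq> h -` S \<inter> PiE I X" unfolding fam_def by auto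
  ultimately have "h -` S \<inter> PiE I X = (\<Union>cn\<in>fam. box cn)" by (rule subset_antisym)
  then show "h -` S \<inter> space (PiM I m) \<in> sets (PiM I m)"
    using fam_sets space_PiM_mm_space[of I X d m] mm by simp
qed

lemma emeasure_PiM_le_sections:
  assumes P: "\<And>i. i \<in> I \<Longrightarrow> prob_space (M i)" and I: "finite I" and k: "k \<in> I"
    and E: "E \<in> sets (PiM I M)"
    and sec: "\<And>x. x \<in> space (PiM I M) \<Longrightarrow> emeasure (M k) {t\<in>space (M k). x(k:=t) \<in> E} \<le> ennreal c"
  shows "emeasure (PiM I M) E \<le> ennreal c"
proof -
  define M' where "M' i = (if i \<in> I then M i else M k)" for i
  have P': "prob_space (M' i)" for i using P k unfolding M'_def by auto
  have PiM': "PiM I M' = PiM I M" by (rule PiM_cong) (auto simp: M'_def)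
  have Mk: "M' k = M k" using k by (simp add: M'_def)
  interpret product_sigma_finite M'
    by (rule product_sigma_finite.intro) (rule prob_space_imp_sigma_finite[OF P'])
  define J where "J = I - {k}"
  have IJ: "I = insert k J" "k \<notin> J" "finite J" using k I unfolding J_def by auto
  have "emeasure (PiM I M) E = (\<integral>\<^sup>+ x. indicator E x \<partial>PiM I M')"
    using E PiM' by simp
  also have "\<dots> = (\<integral>\<^sup>+ x. (\<integral>\<^sup>+ y. indicator E (x(k := y)) \<partial>M k) \<partial>PiM J M')"
    unfolding IJ(1) Mk[symmetric]
    by (rule product_nn_integral_insert[OF IJ(3) IJ(2)]) (use E IJ PiM' in simp)
  also have "\<dots> \<le> (\<integral>\<^sup>+ x. ennreal c \<partial>PiM J M')"
  proof (rule nn_integral_mono)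
    fix x assume x: "x \<in> space (PiM J M')"
    have "(\<lambda>v. x(k := v)) \<in> measurable (M k) (PiM I M)"
      using measurable_component_update[OF x IJ(2)] PiM' Mk IJ(1) by simp
    then have sec_sets: "{t\<in>space (M k). x(k:=t) \<in> E} \<in> sets (M k)"
      using measurable_sets[OF _ E] by (simp add: vimage_def Int_def conj_commute)
    obtain t0 where t0: "t0 \<in> space (M k)"
      using prob_space.not_empty[OF P[OF k]] by auto
    have "x(k := t0) \<in> space (PiM I M)"
      using x t0 IJ unfolding space_PiM by (auto simp: PiE_iff extensional_def M'_def)
    then have "emeasure (M k) {t\<in>space (M k). x(k:=t) \<in> E} \<le> ennreal c"
      using sec by fastforce
    moreover have "(\<integral>\<^sup>+ y. indicator E (x(k := y)) \<partial>M k) = emeasure (M k) {t\<in>space (M k). x(k:=t) \<in> E}"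
      using sec_sets by (simp add: nn_integral_indicator[symmetric] indicator_def cong: nn_integral_cong)
    ultimately show "(\<integral>\<^sup>+ y. indicator E (x(k := y)) \<partial>M k) \<le> ennreal c" by simp
  qed
  also have "\<dots> = ennreal c"
  proof -
    interpret prob_space "PiM J M'" by (rule prob_space_PiM) (use P' in simp)
    show ?thesis by (simp add: emeasure_space_1)
  qed
  finally show ?thesis .
qed

section \<open>Iterated quantiles of a Lipschitz function on the product\<close>

locale product_lipschitz =
  fixes N :: nat and F :: "(nat \<Rightarrow> real) \<Rightarrow> real"
    and X :: "nat \<Rightarrow> 'a set" and d :: "nat \<Rightarrow> 'a \<Rightarrow> 'a \<Rightarrow> real"
    and m :: "nat \<Rightarrow> 'a measure" and \<kappa> :: "nat \<Rightarrow> real" and f :: "(nat \<Rightarrow> 'a) \<Rightarrow> real"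
  assumes F_class: "F_class N F"
    and mm_space: "\<And>i. i \<in> {1..N} \<Longrightarrow> mm_space (X i) (d i) (m i)"
    and \<kappa>_bounds: "\<And>i. i \<in> {1..N} \<Longrightarrow> 0 < \<kappa> i \<and> \<kappa> i < 1"
    and lipschitz: "lipschitz1 (PiE {1..N} X) (prod_metric N F d) f"
begin

primrec iterated_quantile :: "nat \<Rightarrow> (nat \<Rightarrow> 'a) \<Rightarrow> real" where
  "iterated_quantile 0 = f"
| "iterated_quantile (Suc k) = (\<lambda>x. lower_quantile
     (distr (m (Suc k)) borel (\<lambda>t. iterated_quantile k (x(Suc k := t)))) (\<kappa> (Suc k)))"

definition tail_dist :: "nat \<Rightarrow> (nat \<Rightarrow> 'a) \<Rightarrow> (nat \<Rightarrow> 'a) \<Rightarrow> nat \<Rightarrow> real" where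
  "tail_dist k x y = (\<lambda>i\<in>{1..N}. if i \<le> k then 0 else d i (x i) (y i))"

lemma factor_dist_self: "i \<in> {1..N} \<Longrightarrow> a \<in> X i \<Longrightarrow> d i a a = 0"
  using Metric_space.mdist_zero[OF mm_space_Metric_space[OF mm_space]] by blast

lemma factor_dist_nonneg: "i \<in> {1..N} \<Longrightarrow> 0 \<le> d i a b"
  using Metric_space.nonneg[OF mm_space_Metric_space[OF mm_space]] by blast

lemma update_in_PiE: "x \<in> PiE {1..N} X \<Longrightarrow> k \<in> {1..N} \<Longrightarrow> t \<in> X k \<Longrightarrow> x(k := t) \<in> PiE {1..N} X"
  by (auto simp: PiE_iff extensional_def)

lemma tail_dist_nonneg: "tail_dist k x y \<in> PiE {1..N} (\<lambda>_. {0..})"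
  using factor_dist_nonneg by (auto simp: tail_dist_def)

lemma tail_dist_update_same:
  assumes "x \<in> PiE {1..N} X" "k \<in> {1..N}"
  shows "tail_dist (k - 1) (x(k := t)) (x(k := s)) = coord_emb N k (d k t s)"
  using assms factor_dist_self by (auto simp: tail_dist_def coord_emb_def fun_eq_iff PiE_iff)

lemma tail_dist_update_both:
  assumes "k \<in> {1..N}" "t \<in> X k"
  shows "tail_dist (k - 1) (x(k := t)) (y(k := t)) = tail_dist k x y"
  using assms factor_dist_self by (auto simp: tail_dist_def fun_eq_iff)

lemma tail_dist_update_left:
  assumes "x \<in> PiE {1..N} X" "k \<in> {1..N}"
  shows "tail_dist k (x(k := t)) x = (\<lambda>i\<in>{1..N}. 0)"
  using assms factor_dist_self by (auto simp: tail_dist_def fun_eq_iff PiE_iff)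

lemma tail_dist_last: "tail_dist N x y = (\<lambda>i\<in>{1..N}. 0)"
  by (auto simp: tail_dist_def fun_eq_iff)

lemma section_modulus:
  assumes lip: "\<And>x y. x \<in> PiE {1..N} X \<Longrightarrow> y \<in> PiE {1..N} X \<Longrightarrow>
      \<bar>\<psi> x - \<psi> y\<bar> \<le> F (tail_dist (k - 1) x y)"
    and k: "k \<in> {1..N}" and x: "x \<in> PiE {1..N} X" and ts: "t \<in> X k" "s \<in> X k"
  shows "\<bar>\<psi> (x(k := t)) - \<psi> (x(k := s))\<bar> \<le> F (coord_emb N k (d k t s))"
  using lip[OF update_in_PiE[OF x k ts(1)] update_in_PiE[OF x k ts(2)]]
  unfolding tail_dist_update_same[OF x k] .

lemma section_measurable:
  assumes "\<And>x y. x \<in> PiE {1..N} X \<Longrightarrow> y \<in> PiE {1..N} X \<Longrightarrow>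
      \<bar>\<psi> x - \<psi> y\<bar> \<le> F (tail_dist (k - 1) x y)"
    and k: "k \<in> {1..N}" and x: "x \<in> PiE {1..N} X"
  shows "(\<lambda>t. \<psi> (x(k := t))) \<in> borel_measurable (m k)"
  by (rule mm_space_borel_measurable_modulus[OF mm_space[OF k] F_class_coord_doubling_modulus[OF F_class k]])
    (rule section_modulus[OF assms])

lemma iterated_quantile_lipschitz:
  assumes "k \<le> N" "x \<in> PiE {1..N} X" "y \<in> PiE {1..N} X"
  shows "\<bar>iterated_quantile k x - iterated_quantile k y\<bar> \<le> F (tail_dist k x y)"
  using assms
proof (induction k arbitrary: x y)
  case 0
  have "tail_dist 0 x y = (\<lambda>i\<in>{1..N}. d i (x i) (y i))" by (auto simp: tail_dist_def)
  moreover have "\<bar>f x - f y\<bar> \<le> prod_metric N F d x y"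
    using lipschitz 0 unfolding lipschitz1_def by blast
  ultimately show ?case unfolding prod_metric_def iterated_quantile.simps(1) by (simp only:)
next
  case (Suc k)
  have K: "Suc k \<in> {1..N}" using Suc.prems by simp
  have IH: "\<bar>iterated_quantile k x - iterated_quantile k y\<bar> \<le> F (tail_dist (Suc k - 1) x y)"
    if "x \<in> PiE {1..N} X" "y \<in> PiE {1..N} X" for x y
    using Suc.IH[OF _ that] Suc.prems by simp
  have "\<bar>iterated_quantile k (x(Suc k := t)) - iterated_quantile k (y(Suc k := t))\<bar>
      \<le> F (tail_dist (Suc k) x y)" if "t \<in> space (m (Suc k))" for t
  proof -
    have t: "t \<in> X (Suc k)" using that mm_space_space_eq[OF mm_space[OF K]] by simp
    show ?thesis
      using IH[OF update_in_PiE[OF Suc.prems(2) K t] update_in_PiE[OF Suc.prems(3) K t]]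
      unfolding tail_dist_update_both[OF K t] by simp
  qed
  then show ?case
    using lower_quantile_distr_abs_diff_le[OF mm_space_prob_space[OF mm_space[OF K]]
        section_measurable[OF IH K Suc.prems(2)] section_measurable[OF IH K Suc.prems(3)]] \<kappa>_bounds[OF K]
    by simp
qed

lemma iterated_quantile_section_modulus:
  assumes "k \<in> {1..N}" "x \<in> PiE {1..N} X" "t \<in> X k" "s \<in> X k"
  shows "\<bar>iterated_quantile (k - 1) (x(k := t)) - iterated_quantile (k - 1) (x(k := s))\<bar>
    \<le> F (coord_emb N k (d k t s))"
  using assms by (intro section_modulus[OF iterated_quantile_lipschitz]) auto

lemma iterated_quantile_update:
  assumes "k \<in> {1..N}" "x \<in> PiE {1..N} X" "t \<in> X k"
  shows "iterated_quantile k (x(k := t)) = iterated_quantile k x"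
proof -
  have "\<bar>iterated_quantile k (x(k := t)) - iterated_quantile k x\<bar> \<le> F (tail_dist k (x(k := t)) x)"
    using iterated_quantile_lipschitz[OF _ update_in_PiE[OF assms(2,1,3)] assms(2)] assms(1) by simp
  then show ?thesis unfolding tail_dist_update_left[OF assms(2,1)] F_class_zero[OF F_class] by simp
qed

lemma iterated_quantile_last:
  "x \<in> PiE {1..N} X \<Longrightarrow> y \<in> PiE {1..N} X \<Longrightarrow> iterated_quantile N x = iterated_quantile N y"
  using iterated_quantile_lipschitz[of N x y] unfolding tail_dist_last F_class_zero[OF F_class] by simp

lemma iterated_quantile_measurable:
  assumes "k \<le> N"
  shows "iterated_quantile k \<in> borel_measurable (PiM {1..N} m)"
proof (rule PiM_mm_space_borel_measurable_continuous[OF _ mm_space])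
  fix x e assume x: "x \<in> PiE {1..N} X" and e: "(e::real) > 0"
  obtain \<delta> where \<delta>: "\<delta> > 0"
    "\<And>t. t \<in> PiE {1..N} (\<lambda>_. {0..}) \<Longrightarrow> (\<forall>i\<in>{1..N}. t i < \<delta>) \<Longrightarrow> F t < e"
    using F_class_small_near_zero[OF F_class e] by blast
  have "\<bar>iterated_quantile k x - iterated_quantile k y\<bar> < e"
    if "y \<in> PiE {1..N} X" "\<forall>i\<in>{1..N}. d i (x i) (y i) < \<delta>" for y
  proof -
    have "\<forall>i\<in>{1..N}. tail_dist k x y i < \<delta>" using that \<delta>(1) by (simp add: tail_dist_def)
    then show ?thesis
      using \<delta>(2)[OF tail_dist_nonneg] iterated_quantile_lipschitz[OF assms x that(1)] by fastforce
  qed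
  then show "\<exists>\<delta>>0. \<forall>y\<in>PiE {1..N} X. (\<forall>i\<in>{1..N}. d i (x i) (y i) < \<delta>) \<longrightarrow>
      \<bar>iterated_quantile k x - iterated_quantile k y\<bar> < e"
    using \<delta>(1) by blast
qed simp

definition width :: "nat \<Rightarrow> real" where
  "width i = F (coord_emb N i (enn2real (obs_diam (X i) (d i) (m i) (\<kappa> i))))"

lemma width_nonneg: "0 \<le> width i"
  unfolding width_def by (rule F_class_nonneg[OF F_class coord_emb_nonneg]) simp

definition exceptional :: "nat \<Rightarrow> (nat \<Rightarrow> 'a) set" where
  "exceptional k = {x \<in> PiE {1..N} X. iterated_quantile (k - 1) x < iterated_quantile k x \<or>
     iterated_quantile k x + 2 * width k < iterated_quantile (k - 1) x}"

lemma space_product: "space (PiM {1..N} m) = PiE {1..N} X"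
  by (rule space_PiM_mm_space) (rule mm_space)

lemma prob_space_product: "prob_space (PiM {1..N} m)"
  by (rule prob_space_PiM) (use mm_space_prob_space[OF mm_space] in auto)

lemma exceptional_in_sets:
  assumes "k \<in> {1..N}"
  shows "exceptional k \<in> sets (PiM {1..N} m)"
proof -
  have "iterated_quantile (k - 1) \<in> borel_measurable (PiM {1..N} m)"
    "iterated_quantile k \<in> borel_measurable (PiM {1..N} m)"
    using assms iterated_quantile_measurable[of "k - 1"] iterated_quantile_measurable[of k] by auto
  then have "{x \<in> space (PiM {1..N} m). iterated_quantile (k - 1) x < iterated_quantile k x \<or>
      iterated_quantile k x + 2 * width k < iterated_quantile (k - 1) x} \<in> sets (PiM {1..N} m)"
    by measurable
  then show ?thesis unfolding exceptional_def space_product .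
qed

lemma measure_exceptional_le:
  assumes k: "k \<in> {1..N}"
  shows "measure (PiM {1..N} m) (exceptional k) \<le> 2 * \<kappa> k"
proof -
  interpret P: prob_space "PiM {1..N} m" by (rule prob_space_product)
  interpret Pk: prob_space "m k" by (rule mm_space_prob_space[OF mm_space[OF k]])
  have "emeasure (PiM {1..N} m) (exceptional k) \<le> ennreal (2 * \<kappa> k)"
  proof (rule emeasure_PiM_le_sections[OF mm_space_prob_space[OF mm_space] _ k exceptional_in_sets[OF k]])
    fix x assume "x \<in> space (PiM {1..N} m)"
    then have x: "x \<in> PiE {1..N} X" unfolding space_product .
    define \<phi> where "\<phi> t = iterated_quantile (k - 1) (x(k := t))" for t
    define l where "l = lower_quantile (distr (m k) borel \<phi>) (\<kappa> k)"
    have "iterated_quantile k x = l"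
      using k unfolding l_def \<phi>_def by (cases k) auto
    then have "iterated_quantile k (x(k := t)) = l" if "t \<in> X k" for t
      using iterated_quantile_update[OF k x that] by simp
    then have section_eq: "{t\<in>space (m k). x(k := t) \<in> exceptional k}
        = {t\<in>X k. \<phi> t < l \<or> l + 2 * width k < \<phi> t}"
      using update_in_PiE[OF x k] mm_space_space_eq[OF mm_space[OF k]]
      unfolding exceptional_def \<phi>_def by auto
    have "\<bar>\<phi> t - \<phi> s\<bar> \<le> F (coord_emb N k (d k t s))" if "t \<in> X k" "s \<in> X k" for t s
      unfolding \<phi>_def by (rule iterated_quantile_section_modulus[OF k x that])
    then have "measure (m k) {t\<in>X k. \<phi> t < l \<or> l + 2 * width k < \<phi> t} \<le> 2 * \<kappa> k"
      using lower_quantile_concentration[OF mm_space[OF k] _ _ F_class_coord_doubling_modulus[OF F_class k]]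
        \<kappa>_bounds[OF k]
      unfolding width_def l_def by auto
    then show "emeasure (m k) {t\<in>space (m k). x(k := t) \<in> exceptional k} \<le> ennreal (2 * \<kappa> k)"
      unfolding section_eq by (simp add: Pk.emeasure_eq_measure ennreal_leI)
  qed auto
  then show ?thesis unfolding P.emeasure_eq_measure using \<kappa>_bounds[OF k] by simp
qed

lemma measure_exceptional_Union_le:
  "measure (PiM {1..N} m) (\<Union>k\<in>{1..N}. exceptional k) \<le> 2 * (\<Sum>i=1..N. \<kappa> i)"
proof -
  interpret prob_space "PiM {1..N} m" by (rule prob_space_product)
  have "measure (PiM {1..N} m) (\<Union>k\<in>{1..N}. exceptional k)
      \<le> (\<Sum>k=1..N. measure (PiM {1..N} m) (exceptional k))"
    by (rule finite_measure_subadditive_finite) (use exceptional_in_sets in blast)+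
  also have "\<dots> \<le> (\<Sum>k=1..N. 2 * \<kappa> k)"
    by (rule sum_mono) (rule measure_exceptional_le)
  finally show ?thesis by (simp add: sum_distrib_left)
qed

lemma iterated_quantile_telescope:
  assumes x: "x \<in> PiE {1..N} X - (\<Union>k\<in>{1..N}. exceptional k)" and "j \<le> N"
  shows "iterated_quantile j x \<le> f x \<and> f x \<le> iterated_quantile j x + (\<Sum>i=1..j. 2 * width i)"
  using \<open>j \<le> N\<close>
proof (induction j)
  case (Suc j)
  then have "x \<notin> exceptional (Suc j)" using x by auto
  then have "iterated_quantile (Suc j) x \<le> iterated_quantile j x"
    "iterated_quantile j x \<le> iterated_quantile (Suc j) x + 2 * width (Suc j)"
    using x unfolding exceptional_def by auto
  then show ?case using Suc by simp
qed simp

lemma partial_diam_le_widths: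
  "partial_diam (distr (PiM {1..N} m) borel f) (1 - 2 * (\<Sum>i=1..N. \<kappa> i))
    \<le> ennreal (\<Sum>i=1..N. 2 * width i)"
proof -
  interpret prob_space "PiM {1..N} m" by (rule prob_space_product)
  define S where "S = (\<Sum>i=1..N. 2 * width i)"
  define good where "good = PiE {1..N} X - (\<Union>k\<in>{1..N}. exceptional k)"
  have "(\<Union>k\<in>{1..N}. exceptional k) \<in> events" using exceptional_in_sets by auto
  then have "measure (PiM {1..N} m) good = 1 - measure (PiM {1..N} m) (\<Union>k\<in>{1..N}. exceptional k)"
    unfolding good_def space_product[symmetric] by (rule prob_compl)
  then have good_large: "1 - 2 * (\<Sum>i=1..N. \<kappa> i) \<le> measure (PiM {1..N} m) good"
    using measure_exceptional_Union_le by simp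
  obtain x0 where x0: "x0 \<in> PiE {1..N} X" using not_empty unfolding space_product by blast
  define c where "c = iterated_quantile N x0"
  have f_meas: "f \<in> borel_measurable (PiM {1..N} m)"
    using iterated_quantile_measurable[of 0] by simp
  have "good \<subseteq> f -` {c..c + S} \<inter> space (PiM {1..N} m)"
  proof
    fix x assume x: "x \<in> good"
    then have "iterated_quantile N x = c"
      using iterated_quantile_last[OF _ x0] unfolding good_def c_def by blast
    then show "x \<in> f -` {c..c + S} \<inter> space (PiM {1..N} m)"
      using iterated_quantile_telescope[OF x[unfolded good_def] order_refl] x
      unfolding space_product good_def S_def by auto
  qed
  then have "measure (PiM {1..N} m) good \<le> measure (PiM {1..N} m) (f -` {c..c + S} \<inter> space (PiM {1..N} m))"
    by (intro finite_measure_mono measurable_sets[OF f_meas]) auto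
  then have "partial_diam (distr (PiM {1..N} m) borel f) (1 - 2 * (\<Sum>i=1..N. \<kappa> i)) \<le> ediam {c..c + S}"
    using good_large by (intro partial_diam_le_ediam[OF f_meas]) auto
  also have "\<dots> \<le> ennreal S"
    using ediam_atLeastAtMost_le[of c "c + S"] width_nonneg unfolding S_def by (simp add: sum_nonneg)
  finally show ?thesis unfolding S_def .
qed

end

section \<open>The observable diameter of the product\<close>

lemma obs_diam_product_le:
  assumes F: "F_class N F"
    and mm: "\<And>i. i \<in> {1..N} \<Longrightarrow> mm_space (X i) (d i) (m i)"
    and \<kappa>: "\<And>i. i \<in> {1..N} \<Longrightarrow> 0 < \<kappa> i \<and> \<kappa> i < 1"
  shows "obs_diam (PiE {1..N} X) (prod_metric N F d) (PiM {1..N} m) (2 * (\<Sum>i=1..N. \<kappa> i))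
    \<le> ennreal (\<Sum>i=1..N. 2 * F (coord_emb N i (enn2real (obs_diam (X i) (d i) (m i) (\<kappa> i)))))"
  unfolding obs_diam_def[of "PiE {1..N} X" "prod_metric N F d" "PiM {1..N} m"]
proof (rule SUP_least)
  fix f assume "f \<in> {f. lipschitz1 (PiE {1..N} X) (prod_metric N F d) f}"
  then interpret product_lipschitz N F X d m \<kappa> f
    using F mm \<kappa> by unfold_locales auto
  show "partial_diam (distr (PiM {1..N} m) borel f) (1 - 2 * (\<Sum>i=1..N. \<kappa> i))
      \<le> ennreal (\<Sum>i=1..N. 2 * F (coord_emb N i (enn2real (obs_diam (X i) (d i) (m i) (\<kappa> i)))))"
    using partial_diam_le_widths unfolding width_def .
qed

lemma ennreal_sum_double_le:
  fixes w :: "nat \<Rightarrow> real"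
  assumes "1 \<le> N" "\<And>i. 0 \<le> w i"
  shows "ennreal (\<Sum>i=1..N. 2 * w i) \<le> 4 * ennreal (w 1) + 8 * (\<Sum>i=2..N. ennreal (w i))"
proof -
  have "(\<Sum>i=1..N. 2 * w i) \<le> 4 * w 1 + 8 * (\<Sum>i=2..N. w i)"
    using assms sum.atLeast_Suc_atMost[of 1 N "\<lambda>i. 2 * w i"]
    by (simp add: numeral_2_eq_2 sum_distrib_left[symmetric] sum_nonneg)
  then have "ennreal (\<Sum>i=1..N. 2 * w i) \<le> ennreal (4 * w 1 + 8 * (\<Sum>i=2..N. w i))"
    by (rule ennreal_leI)
  also have "\<dots> = 4 * ennreal (w 1) + 8 * (\<Sum>i=2..N. ennreal (w i))"
    using assms(2) by (simp add: ennreal_plus ennreal_mult sum_nonneg)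
  finally show ?thesis .
qed

theorem mainTheorem11:
  fixes N :: nat and F :: "(nat \<Rightarrow> real) \<Rightarrow> real"
    and X :: "nat \<Rightarrow> 'a set" and d :: "nat \<Rightarrow> 'a \<Rightarrow> 'a \<Rightarrow> real"
    and m :: "nat \<Rightarrow> 'a measure" and \<kappa> :: "nat \<Rightarrow> real"
  assumes "N \<ge> 1"
    and "F_class N F"
    and "\<And>i. i \<in> {1..N} \<Longrightarrow> mm_space (X i) (d i) (m i)"
    and "0 < \<kappa> 1" and "\<kappa> 1 < 1"
    and "\<And>i. i \<in> {2..N} \<Longrightarrow> 0 < \<kappa> i \<and> \<kappa> i < 1/4"
  shows "obs_diam (PiE {1..N} X) (prod_metric N F d) (PiM {1..N} m) (2 * (\<Sum>i=1..N. \<kappa> i))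
     \<le> 4 * ennreal (F (coord_emb N 1 (enn2real (obs_diam (X 1) (d 1) (m 1) (\<kappa> 1)))))
       + 8 * (\<Sum>i=2..N. ennreal (F (coord_emb N i (enn2real (obs_diam (X i) (d i) (m i) (\<kappa> i))))))"
proof -
  have \<kappa>: "0 < \<kappa> i \<and> \<kappa> i < 1" if "i \<in> {1..N}" for i
    using assms(4,5) assms(6)[of i] that by (cases "i = 1") auto
  have nonneg: "0 \<le> F (coord_emb N i (enn2real (obs_diam (X i) (d i) (m i) (\<kappa> i))))" for i
    by (rule F_class_nonneg[OF assms(2) coord_emb_nonneg]) simp
  show ?thesis
    by (rule order_trans[OF obs_diam_product_le[OF assms(2,3) \<kappa>] ennreal_sum_double_le[OF assms(1) nonneg]])
qed

end
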